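(* Fix a directed edge set $\mathcal{E}$ and a randomized design with $0<\mathbb{E}[z_i]<1$ for all $i$. Suppose the individually weighted linear estimator $\hat{\mathrm{est}}({\bf w},{\bf v})=\sum_i(w_iz_i+v_i(1-z_i))Y_i({\bf z})$ is unbiased for $\mathrm{ATE}$ under the heterogeneous additive network effects model with edge set $\mathcal{E}$, for every choice of real parameters $\alpha,\beta,\{\gamma_{ki}\}_{(k,i)\in\mathcal{E}}$. Then necessarily $w_i=\frac{1}{n\mathbb{E}[z_i]}$ and $v_i=-\frac1{n\mathbb{E}[1-z_i]}$, i.e. $\hat{\mathrm{est}}=\frac1n\sum_i\big(\frac{z_i}{\mathbb{E}[z_i]}-\frac{1-z_i}{\mathbb{E}[1-z_i]}\big)Y_i({\bf z})$, and $z_k$ and $z_i$ are independent for every $(k,i)\in\mathcal{E}$.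
   Context: Population $[n]$; random treatment vector ${\bf z}\in\{0,1\}^n$ drawn from a randomized design. Heterogeneous additive network effects model: $Y_i({\bf z})=\alpha_i+\beta_iz_i+\sum_{k\in[n]}\gamma_{ki}z_k$ with deterministic real parameters, $\gamma_{ki}=0$ unless $(k,i)\in\mathcal{E}$, where $\mathcal{E}$ is a set of ordered pairs $(k,i)$, $k\neq i$. Average (direct) treatment effect: $\mathrm{ATE}=\frac1n\sum_i(Y_i({\bf e}_i)-Y_i({\bf 0}))=\frac1n\sum_i\beta_i$, where ${\bf e}_i$ is the $i$-th standard basis vector. Individually weighted linear estimators have deterministic weights ${\bf w},{\bf v}$ not depending on ${\bf z}$. *)

theory Defs
  imports "HOL-Probability.Probability"
begin

text \<open>Population = the finite type 'n (so n = CARD('n)); a treatment vector is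
  z :: 'n \<Rightarrow> bool, with z i read as the indicator of treatment of unit i.
  A randomized design is a pmf on treatment vectors.\<close>

definition zind :: "bool \<Rightarrow> real" where
  "zind b = (if b then 1 else 0)"

definition HANE_outcome ::
  "('n::finite \<Rightarrow> real) \<Rightarrow> ('n \<Rightarrow> real) \<Rightarrow> ('n \<Rightarrow> 'n \<Rightarrow> real) \<Rightarrow> 'n \<Rightarrow> ('n \<Rightarrow> bool) \<Rightarrow> real" where
  "HANE_outcome \<alpha> \<beta> \<gamma> i z = \<alpha> i + \<beta> i * zind (z i) + (\<Sum>k\<in>UNIV. \<gamma> k i * zind (z k))"

definition ATE :: "('n::finite \<Rightarrow> ('n \<Rightarrow> bool) \<Rightarrow> real) \<Rightarrow> real" where
  "ATE Y = (1 / real CARD('n)) * (\<Sum>i\<in>UNIV. Y i (\<lambda>j. j = i) - Y i (\<lambda>_. False))"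

definition est :: "('n::finite \<Rightarrow> real) \<Rightarrow> ('n \<Rightarrow> real) \<Rightarrow> ('n \<Rightarrow> ('n \<Rightarrow> bool) \<Rightarrow> real) \<Rightarrow> ('n \<Rightarrow> bool) \<Rightarrow> real" where
  "est w v Y z = (\<Sum>i\<in>UNIV. (w i * zind (z i) + v i * (1 - zind (z i))) * Y i z)"

end

theory Submission
  imports Defs
begin

text \<open>The expectation of the estimator is linear in the model parameters \<open>\<alpha>, \<beta>, \<gamma>\<close>, and so is
  the ATE, so unbiasedness for all parameters is unbiasedness coefficient by coefficient. With
  \<open>a\<^sub>i = w\<^sub>i z\<^sub>i + v\<^sub>i (1 - z\<^sub>i)\<close>, the coefficients of \<open>\<alpha>\<^sub>j\<close>, \<open>\<beta>\<^sub>j\<close> and \<open>\<gamma>\<^sub>k\<^sub>i\<close> give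
  \<open>E[a\<^sub>j] = 0\<close>, \<open>E[a\<^sub>j z\<^sub>j] = 1/n\<close> and \<open>E[a\<^sub>i z\<^sub>k] = 0\<close> for every edge \<open>(k, i)\<close>. The first two
  determine \<open>w\<^sub>j\<close> and \<open>v\<^sub>j\<close>; substituted into the third they force \<open>E[z\<^sub>k z\<^sub>i] = E[z\<^sub>k] E[z\<^sub>i]\<close>,
  and two uncorrelated Boolean random variables are independent.\<close>

lemma expectation_zind_affine:
  fixes D :: "'a::finite pmf" and X :: "'a \<Rightarrow> bool" and a b :: real
  shows "measure_pmf.expectation D (\<lambda>x. a * zind (X x) + b * (1 - zind (X x)))
       = a * measure_pmf.expectation D (\<lambda>x. zind (X x))
         + b * (1 - measure_pmf.expectation D (\<lambda>x. zind (X x)))"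
  by (simp add: integrable_measure_pmf_finite)

lemma expectation_zind_bilinear:
  fixes D :: "'a::finite pmf" and X Y :: "'a \<Rightarrow> bool" and a b c d :: real
  defines "p \<equiv> measure_pmf.expectation D (\<lambda>x. zind (X x))"
    and "r \<equiv> measure_pmf.expectation D (\<lambda>x. zind (Y x))"
    and "q \<equiv> measure_pmf.expectation D (\<lambda>x. zind (X x) * zind (Y x))"
  shows "measure_pmf.expectation D
           (\<lambda>x. (a * zind (X x) + b * (1 - zind (X x))) * (c * zind (Y x) + d * (1 - zind (Y x))))
       = a * c * q + a * d * (p - q) + b * c * (r - q) + b * d * (1 - p - r + q)"
proof -
  have "(a * zind (X x) + b * (1 - zind (X x))) * (c * zind (Y x) + d * (1 - zind (Y x)))
      = (a * c - a * d - b * c + b * d) * (zind (X x) * zind (Y x))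
        + (a * d - b * d) * zind (X x) + (b * c - b * d) * zind (Y x) + b * d" for x
    by (simp add: algebra_simps)
  then show ?thesis
    by (simp add: integrable_measure_pmf_finite p_def q_def r_def algebra_simps)
qed

lemma of_bool_mem_eq_zind_affine:
  "of_bool (b \<in> A) = of_bool (True \<in> A) * zind b + of_bool (False \<in> A) * (1 - zind b)"
  by (cases b) (auto simp: zind_def)

lemma prob_eq_expectation_of_bool:
  fixes D :: "'a pmf"
  shows "measure_pmf.prob D S = measure_pmf.expectation D (\<lambda>x. of_bool (x \<in> S))"
  by (simp flip: indicator_def)

lemma Int_stable_vimage: "Int_stable {f -` A \<inter> S | A. A \<in> sets M}"
proof (rule Int_stableI, safe)
  fix A B assume "A \<in> sets M" "B \<in> sets M"
  then show "\<exists>C. f -` A \<inter> S \<inter> (f -` B \<inter> S) = f -` C \<inter> S \<and> C \<in> sets M"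
    by (intro exI[of _ "A \<inter> B"]) auto
qed

lemma indep_var_bool_pmfI:
  fixes D :: "'a::finite pmf" and X Y :: "'a \<Rightarrow> bool"
  assumes uncorrelated: "measure_pmf.expectation D (\<lambda>x. zind (X x) * zind (Y x))
      = measure_pmf.expectation D (\<lambda>x. zind (X x)) * measure_pmf.expectation D (\<lambda>x. zind (Y x))"
  shows "prob_space.indep_var (measure_pmf D) (count_space UNIV) X (count_space UNIV) Y"
  unfolding prob_space.indep_var_eq[OF measure_pmf.prob_space_axioms]
proof (intro conjI prob_space.indep_set_sigma_sets[OF measure_pmf.prob_space_axioms])
  show "prob_space.indep_set (measure_pmf D)
          {X -` A \<inter> space (measure_pmf D) |A. A \<in> sets (count_space UNIV)}
          {Y -` B \<inter> space (measure_pmf D) |B. B \<in> sets (count_space UNIV)}"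
  proof (safe intro!: prob_space.indep_setI[OF measure_pmf.prob_space_axioms])
    fix A B :: "bool set"
    have "measure_pmf.prob D (X -` A \<inter> Y -` B)
        = measure_pmf.expectation D (\<lambda>x. of_bool (X x \<in> A) * of_bool (Y x \<in> B))"
      by (simp add: prob_eq_expectation_of_bool of_bool_conj)
    \<comment> \<open>Both indicators are affine in \<open>zind\<close>, so the product rule for \<open>A = B = {True}\<close>
      propagates to all events by bilinearity.\<close>
    also have "\<dots> = measure_pmf.expectation D (\<lambda>x. of_bool (X x \<in> A))
                  * measure_pmf.expectation D (\<lambda>x. of_bool (Y x \<in> B))"
      by (simp only: of_bool_mem_eq_zind_affine[of "X _"] of_bool_mem_eq_zind_affine[of "Y _"]
            expectation_zind_bilinear expectation_zind_affine uncorrelated)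
        (simp add: algebra_simps)
    also have "\<dots> = measure_pmf.prob D (X -` A) * measure_pmf.prob D (Y -` B)"
      by (simp add: prob_eq_expectation_of_bool)
    finally show "measure_pmf.prob D (X -` A \<inter> space (measure_pmf D) \<inter> (Y -` B \<inter> space (measure_pmf D)))
        = measure_pmf.prob D (X -` A \<inter> space (measure_pmf D))
          * measure_pmf.prob D (Y -` B \<inter> space (measure_pmf D))"
      by simp
  qed auto
qed (rule Int_stable_vimage | simp)+

definition est_weight :: "('n \<Rightarrow> real) \<Rightarrow> ('n \<Rightarrow> real) \<Rightarrow> 'n \<Rightarrow> ('n \<Rightarrow> bool) \<Rightarrow> real" where
  "est_weight w v i z = w i * zind (z i) + v i * (1 - zind (z i))"

definition unbiased_under_HANE ::
  "('n::finite \<Rightarrow> bool) pmf \<Rightarrow> ('n \<times> 'n) set \<Rightarrow> ('n \<Rightarrow> real) \<Rightarrow> ('n \<Rightarrow> real) \<Rightarrow> bool" where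
  "unbiased_under_HANE D \<E> w v \<longleftrightarrow>
     (\<forall>\<alpha> \<beta> (\<gamma> :: 'n \<Rightarrow> 'n \<Rightarrow> real). (\<forall>k i. (k, i) \<notin> \<E> \<longrightarrow> \<gamma> k i = 0) \<longrightarrow>
        measure_pmf.expectation D (est w v (HANE_outcome \<alpha> \<beta> \<gamma>)) = ATE (HANE_outcome \<alpha> \<beta> \<gamma>))"

lemma expectation_est_HANE_outcome:
  fixes D :: "('n::finite \<Rightarrow> bool) pmf"
  shows "measure_pmf.expectation D (est w v (HANE_outcome \<alpha> \<beta> \<gamma>))
       = (\<Sum>i\<in>UNIV. \<alpha> i * measure_pmf.expectation D (est_weight w v i)
            + \<beta> i * measure_pmf.expectation D (\<lambda>z. est_weight w v i z * zind (z i))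
            + (\<Sum>k\<in>UNIV. \<gamma> k i * measure_pmf.expectation D (\<lambda>z. est_weight w v i z * zind (z k))))"
proof -
  have "est w v (HANE_outcome \<alpha> \<beta> \<gamma>)
      = (\<lambda>z. \<Sum>i\<in>UNIV. \<alpha> i * est_weight w v i z + \<beta> i * (est_weight w v i z * zind (z i))
            + (\<Sum>k\<in>UNIV. \<gamma> k i * (est_weight w v i z * zind (z k))))"
    unfolding est_def HANE_outcome_def est_weight_def[symmetric]
    by (simp add: ring_distribs sum_distrib_left mult_ac fun_eq_iff)
  then show ?thesis
    by (simp add: integrable_measure_pmf_finite integral_sum)
qed

lemma ATE_HANE_outcome:
  fixes \<beta> :: "'n::finite \<Rightarrow> real"
  shows "ATE (HANE_outcome \<alpha> \<beta> \<gamma>) = (\<Sum>i\<in>UNIV. \<beta> i + \<gamma> i i) / real CARD('n)"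
proof -
  have "HANE_outcome \<alpha> \<beta> \<gamma> i (\<lambda>j. j = i) - HANE_outcome \<alpha> \<beta> \<gamma> i (\<lambda>_. False) = \<beta> i + \<gamma> i i" for i
    by (simp add: HANE_outcome_def zind_def if_distrib cong: if_cong)
  then show ?thesis
    by (simp add: ATE_def)
qed

lemma unbiased_under_HANE_moments:
  fixes D :: "('n::finite \<Rightarrow> bool) pmf"
  assumes unbiased: "unbiased_under_HANE D \<E> w v"
  shows "measure_pmf.expectation D (est_weight w v j) = 0"
    and "measure_pmf.expectation D (\<lambda>z. est_weight w v j z * zind (z j)) = 1 / real CARD('n)"
    and "(k, i) \<in> \<E> \<Longrightarrow> k \<noteq> i \<Longrightarrow>
           measure_pmf.expectation D (\<lambda>z. est_weight w v i z * zind (z k)) = 0"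
proof -
  note unbiased = unbiased[unfolded unbiased_under_HANE_def, rule_format]
  show "measure_pmf.expectation D (est_weight w v j) = 0"
    using unbiased[where \<alpha>="\<lambda>i. of_bool (i = j)" and \<beta>="\<lambda>_. 0" and \<gamma>="\<lambda>_ _. 0"]
    by (simp add: expectation_est_HANE_outcome ATE_HANE_outcome)
  show "measure_pmf.expectation D (\<lambda>z. est_weight w v j z * zind (z j)) = 1 / real CARD('n)"
    using unbiased[where \<alpha>="\<lambda>_. 0" and \<beta>="\<lambda>i. of_bool (i = j)" and \<gamma>="\<lambda>_ _. 0"]
    by (simp add: expectation_est_HANE_outcome ATE_HANE_outcome)
  show "measure_pmf.expectation D (\<lambda>z. est_weight w v i z * zind (z k)) = 0"
    if "(k, i) \<in> \<E>" "k \<noteq> i"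
  proof -
    let ?\<gamma> = "\<lambda>a b. of_bool (a = k) * of_bool (b = i) :: real"
    have "measure_pmf.expectation D (est w v (HANE_outcome (\<lambda>_. 0) (\<lambda>_. 0) ?\<gamma>))
        = ATE (HANE_outcome (\<lambda>_. 0) (\<lambda>_. 0) ?\<gamma>)"
      using that by (intro unbiased) auto
    then show ?thesis
      using that
      by (simp add: expectation_est_HANE_outcome ATE_HANE_outcome of_bool_def
          if_distrib[where f="\<lambda>x. x * _"] cong: if_cong)
  qed
qed

lemma unbiased_under_HANE_weights:
  fixes D :: "('n::finite \<Rightarrow> bool) pmf" and i :: 'n
  defines "p \<equiv> measure_pmf.expectation D (\<lambda>z. zind (z i))"
  assumes unbiased: "unbiased_under_HANE D \<E> w v" and "0 < p" "p < 1"
  shows "w i = 1 / (real CARD('n) * p) \<and> v i = - 1 / (real CARD('n) * (1 - p))"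
proof -
  have "(\<lambda>z. est_weight w v i z * zind (z i)) = (\<lambda>z. w i * zind (z i))"
    by (simp add: fun_eq_iff est_weight_def zind_def)
  then have treated: "w i * p = 1 / real CARD('n)"
    using unbiased_under_HANE_moments(2)[OF unbiased, of i] by (simp add: p_def)
  have "w i * p + v i * (1 - p) = 0"
    using unbiased_under_HANE_moments(1)[OF unbiased, of i]
    by (simp add: est_weight_def[abs_def] expectation_zind_affine p_def)
  with treated have "v i * (1 - p) = - 1 / real CARD('n)"
    by linarith
  with treated \<open>0 < p\<close> \<open>p < 1\<close> show ?thesis
    by (simp add: field_simps)
qed

lemma unbiased_under_HANE_indep_var:
  fixes D :: "('n::finite \<Rightarrow> bool) pmf"
  defines "p \<equiv> \<lambda>j. measure_pmf.expectation D (\<lambda>z. zind (z j))"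
  assumes unbiased: "unbiased_under_HANE D \<E> w v"
    and edge: "(k, i) \<in> \<E>" "k \<noteq> i" and "0 < p i" "p i < 1"
  shows "prob_space.indep_var (measure_pmf D) (count_space UNIV) (\<lambda>z. z k) (count_space UNIV) (\<lambda>z. z i)"
proof (rule indep_var_bool_pmfI)
  define n where "n = real CARD('n)"
  define q where "q = measure_pmf.expectation D (\<lambda>z. zind (z i) * zind (z k))"
  have "w i * q + v i * (p k - q) = 0"
    using unbiased_under_HANE_moments(3)[OF unbiased edge]
      expectation_zind_bilinear[where X="\<lambda>z. z i" and Y="\<lambda>z. z k"
        and a="w i" and b="v i" and c=1 and d=0]
    by (simp add: est_weight_def p_def q_def)
  moreover have "w i = 1 / (n * p i)" "v i = - 1 / (n * (1 - p i))"
    using unbiased_under_HANE_weights[OF unbiased] \<open>0 < p i\<close> \<open>p i < 1\<close> by (simp_all add: n_def p_def)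
  moreover have "0 < n"
    by (simp add: n_def)
  ultimately have "q = p k * p i"
    using \<open>0 < p i\<close> \<open>p i < 1\<close> by (simp add: field_simps)
  then show "measure_pmf.expectation D (\<lambda>z. zind (z k) * zind (z i))
      = measure_pmf.expectation D (\<lambda>z. zind (z k)) * measure_pmf.expectation D (\<lambda>z. zind (z i))"
    by (simp add: q_def p_def mult.commute)
qed

theorem theorem3:
  fixes D :: "('n::finite \<Rightarrow> bool) pmf"
    and \<E> :: "('n \<times> 'n) set"
    and w v :: "'n \<Rightarrow> real"
  assumes edges: "\<forall>(k, i)\<in>\<E>. k \<noteq> i"
    and design: "\<forall>i. 0 < measure_pmf.expectation D (\<lambda>z. zind (z i))
                    \<and> measure_pmf.expectation D (\<lambda>z. zind (z i)) < 1"
    and unbiased: "\<forall>\<alpha> \<beta> (\<gamma> :: 'n \<Rightarrow> 'n \<Rightarrow> real).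
                    (\<forall>k i. (k, i) \<notin> \<E> \<longrightarrow> \<gamma> k i = 0) \<longrightarrow>
                    measure_pmf.expectation D (est w v (HANE_outcome \<alpha> \<beta> \<gamma>))
                      = ATE (HANE_outcome \<alpha> \<beta> \<gamma>)"
  shows "(\<forall>i. w i = 1 / (real CARD('n) * measure_pmf.expectation D (\<lambda>z. zind (z i)))
            \<and> v i = - 1 / (real CARD('n) * measure_pmf.expectation D (\<lambda>z. 1 - zind (z i))))
         \<and> (\<forall>(k, i)\<in>\<E>. prob_space.indep_var (measure_pmf D)
                (count_space UNIV) (\<lambda>z. z k) (count_space UNIV) (\<lambda>z. z i))"
proof -
  have unbiased': "unbiased_under_HANE D \<E> w v"
    using unbiased unfolding unbiased_under_HANE_def .
  have "measure_pmf.expectation D (\<lambda>z. 1 - zind (z i))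
      = 1 - measure_pmf.expectation D (\<lambda>z. zind (z i))" for i
    by (simp add: integrable_measure_pmf_finite)
  then show ?thesis
    using unbiased_under_HANE_weights[OF unbiased'] unbiased_under_HANE_indep_var[OF unbiased']
      edges design by auto
qed

end
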